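(* Let $\lvert\psi\rangle$ be an $n$-qubit state. Suppose the fidelity $\lvert\langle\psi|\phi\rangle\rvert^2$ is maximized by $\lvert\phi\rangle = \lvert0^n\rangle$ over stabilizer states $\lvert\phi\rangle$. Let $S^* = 0^n \times \mathbb F_2^n = \mathrm{Weyl}(\lvert0^n\rangle)$, and let $T = 0^{n + 1} \times \mathbb F_2^{n - 1}$ be a maximal subspace. Then \[\sum_{x \in S^* \setminus T}q_\psi(x) \geq \frac{2-\sqrt{3}}{2} F_\mathcal{S}(\lvert\psi\rangle)^4.\]
   Context: For $x=(a,b)\in\mathbb F_2^{2n}$ the Weyl operator is $W_x = i^{a\cdot b}X^{a_1}Z^{b_1}\otimes\cdots\otimes X^{a_n}Z^{b_n}$; $p_\psi(x)=2^{-n}\langle\psi|W_x|\psi\rangle^2$ and $q_\psi(x)=\sum_{y\in\mathbb F_2^{2n}}p_\psi(y)p_\psi(x+y)$ (the distribution produced by Bell difference sampling); $\mathrm{Weyl}(\lvert\phi\rangle)=\{x: W_x\lvert\phi\rangle=\pm\lvert\phi\rangle\}$; $F_\mathcal{S}(\lvert\psi\rangle)=\max_{\lvert\phi\rangle\text{ stabilizer}}\lvert\langle\phi|\psi\rangle\rvert^2$. *)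

theory Defs
  imports Complex_Main
begin

text \<open>Bit strings in F_2^n are functions nat => bool vanishing at indices >= n.
  Qubit k (1-based in the paper) is index k-1 here. An n-qubit state is a function
  from bit strings to complex amplitudes (only values on bitvecs n matter).\<close>

definition bitvecs :: "nat \<Rightarrow> (nat \<Rightarrow> bool) set" where
  "bitvecs n = {a. \<forall>i. n \<le> i \<longrightarrow> \<not> a i}"

definition xorv :: "(nat \<Rightarrow> bool) \<Rightarrow> (nat \<Rightarrow> bool) \<Rightarrow> (nat \<Rightarrow> bool)" where
  "xorv a b = (\<lambda>i. a i \<noteq> b i)"

definition zerov :: "nat \<Rightarrow> bool" where
  "zerov = (\<lambda>_. False)"

definition dotn :: "nat \<Rightarrow> (nat \<Rightarrow> bool) \<Rightarrow> (nat \<Rightarrow> bool) \<Rightarrow> nat" where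
  "dotn n a b = card {i. i < n \<and> a i \<and> b i}"

definition pts :: "nat \<Rightarrow> ((nat \<Rightarrow> bool) \<times> (nat \<Rightarrow> bool)) set" where
  "pts n = bitvecs n \<times> bitvecs n"

definition addp :: "(nat \<Rightarrow> bool) \<times> (nat \<Rightarrow> bool) \<Rightarrow> (nat \<Rightarrow> bool) \<times> (nat \<Rightarrow> bool)
    \<Rightarrow> (nat \<Rightarrow> bool) \<times> (nat \<Rightarrow> bool)" where
  "addp x y = (xorv (fst x) (fst y), xorv (snd x) (snd y))"

text \<open>Weyl operator W_(a,b) = i^(a.b) X^(a_1)Z^(b_1) (x) ... (x) X^(a_n)Z^(b_n) applied to psi:
  (X^a Z^b psi)(w) = (-1)^(b.(w+a)) psi(w+a).\<close>
definition weyl_op :: "nat \<Rightarrow> (nat \<Rightarrow> bool) \<times> (nat \<Rightarrow> bool) \<Rightarrow> ((nat \<Rightarrow> bool) \<Rightarrow> complex)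
    \<Rightarrow> ((nat \<Rightarrow> bool) \<Rightarrow> complex)" where
  "weyl_op n x psi = (\<lambda>w. \<i> ^ (dotn n (fst x) (snd x))
      * (-1) ^ (dotn n (snd x) (xorv w (fst x))) * psi (xorv w (fst x)))"

definition braket :: "nat \<Rightarrow> ((nat \<Rightarrow> bool) \<Rightarrow> complex) \<Rightarrow> ((nat \<Rightarrow> bool) \<Rightarrow> complex) \<Rightarrow> complex" where
  "braket n phi psi = (\<Sum>z\<in>bitvecs n. cnj (phi z) * psi z)"

definition is_state :: "nat \<Rightarrow> ((nat \<Rightarrow> bool) \<Rightarrow> complex) \<Rightarrow> bool" where
  "is_state n psi \<longleftrightarrow> braket n psi psi = 1"

definition Weyl :: "nat \<Rightarrow> ((nat \<Rightarrow> bool) \<Rightarrow> complex) \<Rightarrow> ((nat \<Rightarrow> bool) \<times> (nat \<Rightarrow> bool)) set" where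
  "Weyl n phi = {x \<in> pts n. (\<forall>w\<in>bitvecs n. weyl_op n x phi w = phi w)
                          \<or> (\<forall>w\<in>bitvecs n. weyl_op n x phi w = - phi w)}"

text \<open>Stabilizer state: a unit vector stabilized (up to sign) by 2^n Weyl operators,
  i.e. the unique (up to phase) joint eigenvector of a maximal stabilizer group.\<close>
definition is_stabilizer :: "nat \<Rightarrow> ((nat \<Rightarrow> bool) \<Rightarrow> complex) \<Rightarrow> bool" where
  "is_stabilizer n phi \<longleftrightarrow> is_state n phi \<and> card (Weyl n phi) = 2 ^ n"

text \<open>p_psi(x) = 2^(-n) <psi|W_x|psi>^2 (a real number since W_x is Hermitian).\<close>
definition p_dist :: "nat \<Rightarrow> ((nat \<Rightarrow> bool) \<Rightarrow> complex) \<Rightarrow> (nat \<Rightarrow> bool) \<times> (nat \<Rightarrow> bool) \<Rightarrow> real" where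
  "p_dist n psi x = Re ((braket n psi (weyl_op n x psi)) ^ 2) / 2 ^ n"

definition q_dist :: "nat \<Rightarrow> ((nat \<Rightarrow> bool) \<Rightarrow> complex) \<Rightarrow> (nat \<Rightarrow> bool) \<times> (nat \<Rightarrow> bool) \<Rightarrow> real" where
  "q_dist n psi x = (\<Sum>y\<in>pts n. p_dist n psi y * p_dist n psi (addp x y))"

definition stab_fidelity :: "nat \<Rightarrow> ((nat \<Rightarrow> bool) \<Rightarrow> complex) \<Rightarrow> real" where
  "stab_fidelity n psi = (SUP phi\<in>{phi. is_stabilizer n phi}. (cmod (braket n phi psi))\<^sup>2)"

definition ket0 :: "(nat \<Rightarrow> bool) \<Rightarrow> complex" where
  "ket0 = (\<lambda>z. if z = zerov then 1 else 0)"

end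

theory Submission
  imports Defs "HOL-Analysis.Convex"
begin

(* Write a = |psi(0^n)|^2 and b = |psi(10^(n-1))|^2.
   The stabilizer states (|0^n> + w|10^(n-1)>)/sqrt 2, w in {1, -1, i, -i}, have fidelity
   |psi(0^n) + conj w psi(10^(n-1))|^2 / 2 <= a with psi; these four constraints give b <= a and
   2ab <= (a - b)^2, i.e. b <= (2 - sqrt 3) a.  Also F_S(psi) <= a.
   For a coset C of a subspace H, Bell difference sampling satisfies q(C) >= p(H) p(C); here
   H = T and C = S* - T.  On 0^n x F_2^n, p is the squared Fourier transform of the measurement
   distribution |psi(z)|^2, whose sums over the two cosets of T are |coset| (a +- b), so by
   Cauchy-Schwarz p(T) >= (a + b)^2/2 and p(S* - T) >= (a - b)^2/2.  Finally
   (a + b)^2 (a - b)^2 / 4 >= (2 - sqrt 3)/2 a^4. *)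

definition unitv :: "nat \<Rightarrow> nat \<Rightarrow> bool" where
  "unitv j = (\<lambda>i. i = j)"

lemma finite_bitvecs: "finite (bitvecs n)"
proof -
  have "bitvecs n \<subseteq> (\<lambda>S i. i \<in> S) ` Pow {..<n}"
  proof
    fix c assume "c \<in> bitvecs n"
    then have "c = (\<lambda>i. i \<in> {i. c i})" "{i. c i} \<in> Pow {..<n}"
      by (auto simp: bitvecs_def not_le[symmetric])
    then show "c \<in> (\<lambda>S i. i \<in> S) ` Pow {..<n}" by blast
  qed
  then show ?thesis by (rule finite_subset) auto
qed

lemma finite_pts: "finite (pts n)"
  by (simp add: pts_def finite_bitvecs)

lemma card_bitvecs: "card (bitvecs n) = 2 ^ n"
proof -
  have "bij_betw (\<lambda>c. {i. c i}) (bitvecs n) (Pow {..<n})"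
    by (rule bij_betw_byWitness[where f' = "\<lambda>S i. i \<in> S"])
       (auto simp: bitvecs_def not_le[symmetric])
  then show ?thesis by (simp add: bij_betw_same_card card_Pow)
qed

lemma zerov_in_bitvecs [simp]: "zerov \<in> bitvecs n"
  by (simp add: bitvecs_def zerov_def)

lemma unitv_in_bitvecs: "j < n \<Longrightarrow> unitv j \<in> bitvecs n"
  by (simp add: bitvecs_def unitv_def)

lemma xorv_in_bitvecs: "a \<in> bitvecs n \<Longrightarrow> b \<in> bitvecs n \<Longrightarrow> xorv a b \<in> bitvecs n"
  by (simp add: bitvecs_def xorv_def)

lemma xorv_cancel [simp]: "xorv (xorv w a) a = w"
  by (auto simp: xorv_def)

lemma xorv_zerov [simp]: "xorv w zerov = w" "xorv zerov w = w" "xorv w w = zerov"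
  by (auto simp: xorv_def zerov_def)

lemma xorv_apply: "xorv a b i \<longleftrightarrow> a i \<noteq> b i"
  by (simp add: xorv_def)

lemma xorv_commute: "xorv a b = xorv b a"
  by (auto simp: xorv_def)

lemma xorv_eq_iff: "xorv w a = c \<longleftrightarrow> w = xorv a c"
  by (auto simp: xorv_def fun_eq_iff)

lemma unitv_neq_zerov [simp]: "unitv j \<noteq> zerov" "zerov \<noteq> unitv j"
  by (auto simp: unitv_def zerov_def fun_eq_iff)

lemma dotn_commute: "dotn n a b = dotn n b a"
  unfolding dotn_def by (metis (lifting))

lemma dotn_zerov [simp]: "dotn n a zerov = 0" "dotn n zerov a = 0"
  by (simp_all add: dotn_def zerov_def)

lemma dotn_unitv:
  assumes "j < n"
  shows "dotn n b (unitv j) = of_bool (b j)" and "dotn n (unitv j) b = of_bool (b j)"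
proof -
  have "{i. i < n \<and> b i \<and> unitv j i} = (if b j then {j} else {})"
    using assms by (auto simp: unitv_def)
  then show "dotn n b (unitv j) = of_bool (b j)" by (simp add: dotn_def)
  then show "dotn n (unitv j) b = of_bool (b j)" by (metis dotn_commute)
qed

lemma minus_one_power_dotn:
  "(-1::'a::comm_ring_1) ^ dotn n b w = (\<Prod>i<n. if b i \<and> w i then -1 else 1)"
  by (simp add: prod.If_cases dotn_def Int_def)

lemma minus_one_power_dotn_xorv:
  "(-1::'a::comm_ring_1) ^ dotn n b (xorv w a) = (-1) ^ dotn n b w * (-1) ^ dotn n b a"
  unfolding minus_one_power_dotn prod.distrib[symmetric]
  by (rule prod.cong) (auto simp: xorv_def)

lemma sum_reindex_xorv:
  assumes "\<And>w. w \<in> A \<Longrightarrow> xorv w a \<in> A"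
  shows "sum f A = (\<Sum>w\<in>A. f (xorv w a))"
  by (rule sum.reindex_bij_witness[of A "\<lambda>w. xorv w a" "\<lambda>w. xorv w a"]) (auto simp: assms)

lemma addp_in_pts: "x \<in> pts n \<Longrightarrow> y \<in> pts n \<Longrightarrow> addp x y \<in> pts n"
  by (auto simp: pts_def addp_def xorv_in_bitvecs)

lemma addp_cancel [simp]: "addp (addp x y) y = x"
  by (simp add: addp_def)

text \<open>\<open>W\<^sub>x\<close> is Hermitian: reindexing by \<open>w \<mapsto> w + a\<close> turns the conjugate of
  \<open>\<langle>\<psi>|W\<^sub>x \<psi>\<rangle>\<close> back into itself, the conjugated phase \<open>(-\<i>)\<^sup>a\<^sup>\<cdot>\<^sup>b\<close> being compensated
  by the sign \<open>(-1)\<^sup>a\<^sup>\<cdot>\<^sup>b\<close> picked up by the shift.\<close>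
lemma braket_weyl_op_real:
  assumes "x \<in> pts n"
  shows "braket n psi (weyl_op n x psi) \<in> \<real>"
proof -
  obtain a b where x: "x = (a, b)" and a: "a \<in> bitvecs n"
    using assms by (cases x) (auto simp: pts_def)
  define d where "d = dotn n a b"
  define sg where "sg = (\<lambda>v. (-1::complex) ^ dotn n b v)"
  have sg_shift: "sg (xorv w a) = sg w * (-1) ^ d" for w
    by (simp add: sg_def d_def minus_one_power_dotn_xorv dotn_commute)
  have i_conj: "(-\<i>) ^ d * (-1) ^ d = \<i> ^ d"
    by (simp flip: power_mult_distrib)
  have B: "braket n psi (weyl_op n x psi) = (\<Sum>w\<in>bitvecs n. cnj (psi w) * (\<i> ^ d * sg (xorv w a) * psi (xorv w a)))"
    by (simp add: braket_def weyl_op_def x d_def sg_def)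
  have "cnj (braket n psi (weyl_op n x psi))
      = (\<Sum>w\<in>bitvecs n. psi w * ((-\<i>) ^ d * sg (xorv w a) * cnj (psi (xorv w a))))"
    by (simp add: B sg_def)
  also have "\<dots> = (\<Sum>w\<in>bitvecs n. psi (xorv w a) * ((-\<i>) ^ d * sg w * cnj (psi w)))"
    by (subst sum_reindex_xorv[where a = a]) (simp_all add: xorv_in_bitvecs a)
  also have "\<dots> = braket n psi (weyl_op n x psi)"
    unfolding B by (rule sum.cong) (auto simp: sg_shift i_conj[symmetric] mult_ac)
  finally show ?thesis
    by (simp add: Reals_cnj_iff)
qed

lemma p_dist_nonneg:
  assumes "x \<in> pts n"
  shows "0 \<le> p_dist n psi x"
proof -
  define B where "B = braket n psi (weyl_op n x psi)"
  have "B \<in> \<real>"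
    using braket_weyl_op_real[OF assms] by (simp add: B_def)
  then have "Re (B ^ 2) = (Re B) ^ 2"
    by (simp add: power2_eq_square complex_is_Real_iff)
  then show ?thesis by (simp add: p_dist_def B_def[symmetric])
qed

text \<open>For \<open>y \<in> H\<close> the shift \<open>x \<mapsto> x + y\<close> permutes \<open>C\<close>, so each \<open>y \<in> H\<close>
  contributes \<open>p(y) p(C)\<close> to \<open>q(C)\<close>.\<close>
lemma sum_q_dist_ge_mass_product:
  assumes H: "H \<subseteq> pts n" and C: "C \<subseteq> pts n"
    and closed: "\<And>x y. x \<in> C \<Longrightarrow> y \<in> H \<Longrightarrow> addp x y \<in> C"
  shows "(\<Sum>y\<in>H. p_dist n psi y) * (\<Sum>x\<in>C. p_dist n psi x) \<le> (\<Sum>x\<in>C. q_dist n psi x)"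
proof -
  have "(\<Sum>y\<in>H. p_dist n psi y) * (\<Sum>x\<in>C. p_dist n psi x)
      = (\<Sum>y\<in>H. p_dist n psi y * (\<Sum>x\<in>C. p_dist n psi (addp x y)))"
    unfolding sum_distrib_right
  proof (rule sum.cong[OF refl])
    fix y assume "y \<in> H"
    then have "(\<Sum>x\<in>C. p_dist n psi x) = (\<Sum>x\<in>C. p_dist n psi (addp x y))"
      by (intro sum.reindex_bij_witness[of _ "\<lambda>x. addp x y" "\<lambda>x. addp x y"]) (auto intro: closed)
    then show "p_dist n psi y * sum (p_dist n psi) C = p_dist n psi y * (\<Sum>x\<in>C. p_dist n psi (addp x y))"
      by simp
  qed
  also have "\<dots> = (\<Sum>x\<in>C. \<Sum>y\<in>H. p_dist n psi y * p_dist n psi (addp x y))"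
    by (simp add: sum_distrib_left sum.swap[of _ H])
  also have "\<dots> \<le> (\<Sum>x\<in>C. q_dist n psi x)"
    unfolding q_dist_def
  proof (rule sum_mono, rule sum_mono2[OF finite_pts H])
    fix x y assume "x \<in> C" "y \<in> pts n - H"
    then show "0 \<le> p_dist n psi y * p_dist n psi (addp x y)"
      using C by (auto intro!: mult_nonneg_nonneg p_dist_nonneg addp_in_pts)
  qed
  finally show ?thesis .
qed

text \<open>On \<open>0\<^sup>n \<times> \<bbbF>\<^sub>2\<^sup>n\<close>, \<open>p\<^sub>\<psi>\<close> is the squared Fourier transform of the distribution
  \<open>|\<psi>(z)|\<^sup>2\<close> of computational basis measurements.\<close>
definition meas_fourier :: "nat \<Rightarrow> ((nat \<Rightarrow> bool) \<Rightarrow> complex) \<Rightarrow> (nat \<Rightarrow> bool) \<Rightarrow> real" where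
  "meas_fourier n psi c = (\<Sum>z\<in>bitvecs n. (-1) ^ dotn n c z * (cmod (psi z))\<^sup>2)"

lemma p_dist_zerov: "p_dist n psi (zerov, c) = (meas_fourier n psi c)\<^sup>2 / 2 ^ n"
proof -
  have "cnj w * ((-1) ^ m * w) = of_real ((-1) ^ m * (cmod w)\<^sup>2)" for w m
    by (simp add: mult_ac flip: complex_norm_square)
  then have "braket n psi (weyl_op n (zerov, c) psi) = of_real (meas_fourier n psi c)"
    by (simp add: braket_def weyl_op_def meas_fourier_def del: of_real_mult of_real_power)
  then show ?thesis by (simp add: p_dist_def)
qed

definition bitvecs_bit0 :: "nat \<Rightarrow> bool \<Rightarrow> (nat \<Rightarrow> bool) set" where
  "bitvecs_bit0 n k = {c \<in> bitvecs n. c 0 = k}"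

lemma finite_bitvecs_bit0: "finite (bitvecs_bit0 n k)"
  using finite_bitvecs by (simp add: bitvecs_bit0_def)

lemma card_bitvecs_bit0:
  assumes "n \<ge> 1"
  shows "2 * card (bitvecs_bit0 n k) = 2 ^ n"
proof -
  have e: "unitv 0 \<in> bitvecs n" using assms by (simp add: unitv_in_bitvecs)
  have "card (bitvecs n) = card (bitvecs_bit0 n k \<union> bitvecs_bit0 n (\<not> k))"
    by (rule arg_cong[where f = card]) (auto simp: bitvecs_bit0_def)
  also have "\<dots> = card (bitvecs_bit0 n k) + card (bitvecs_bit0 n (\<not> k))"
    by (rule card_Un_disjoint) (simp_all add: finite_bitvecs_bit0, auto simp: bitvecs_bit0_def)
  finally have split: "card (bitvecs n) = card (bitvecs_bit0 n k) + card (bitvecs_bit0 n (\<not> k))" .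
  have "bij_betw (\<lambda>c. xorv c (unitv 0)) (bitvecs_bit0 n k) (bitvecs_bit0 n (\<not> k))"
    by (rule bij_betw_byWitness[where f' = "\<lambda>c. xorv c (unitv 0)"])
       (auto simp: bitvecs_bit0_def xorv_in_bitvecs e, auto simp: xorv_def unitv_def)
  then have "card (bitvecs_bit0 n k) = card (bitvecs_bit0 n (\<not> k))"
    by (rule bij_betw_same_card)
  with split show ?thesis by (simp add: card_bitvecs)
qed

text \<open>Any \<open>z \<notin> {0, unitv 0}\<close> has a bit \<open>j \<noteq> 0\<close>, and flipping bit \<open>j\<close> of \<open>c\<close>
  negates the summand.\<close>
lemma sum_bitvecs_bit0_character:
  assumes n: "n \<ge> 1" and z: "z \<in> bitvecs n"
  shows "(\<Sum>c\<in>bitvecs_bit0 n k. (-1::real) ^ dotn n c z) =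
    (if z = zerov then 1 else if z = unitv 0 then (if k then -1 else 1) else 0)
      * card (bitvecs_bit0 n k)"
proof -
  have "z = zerov \<or> z = unitv 0 \<or> (\<exists>j. z j \<and> j \<noteq> 0)"
    by (cases "z 0") (auto simp: fun_eq_iff unitv_def zerov_def)
  then consider "z = zerov" | "z = unitv 0" | j where "z j" "j \<noteq> 0"
    by blast
  then show ?thesis
  proof cases
    case 2
    then show ?thesis
      using n by (simp add: dotn_unitv bitvecs_bit0_def)
  next
    case (3 j)
    then have j: "j < n" using z by (metis bitvecs_def mem_Collect_eq not_less)
    let ?S = "\<Sum>c\<in>bitvecs_bit0 n k. (-1::real) ^ dotn n c z"
    have "?S = (\<Sum>c\<in>bitvecs_bit0 n k. (-1::real) ^ dotn n (xorv c (unitv j)) z)"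
      by (rule sum_reindex_xorv)
         (use 3 j in \<open>auto simp: bitvecs_bit0_def xorv_in_bitvecs unitv_in_bitvecs, auto simp: xorv_def unitv_def\<close>)
    also have "\<dots> = - ?S"
      using 3 j by (simp add: dotn_commute[of n _ z] minus_one_power_dotn_xorv dotn_unitv
          flip: sum_negf)
    finally show ?thesis using 3 by (auto simp: unitv_def zerov_def)
  qed simp
qed

lemma sum_meas_fourier_bitvecs_bit0:
  assumes n: "n \<ge> 1"
  shows "(\<Sum>c\<in>bitvecs_bit0 n k. meas_fourier n psi c) =
    card (bitvecs_bit0 n k) * ((cmod (psi zerov))\<^sup>2 + (if k then -1 else 1) * (cmod (psi (unitv 0)))\<^sup>2)"
proof -
  have "(\<Sum>c\<in>bitvecs_bit0 n k. meas_fourier n psi c)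
      = (\<Sum>z\<in>bitvecs n. (cmod (psi z))\<^sup>2 * (\<Sum>c\<in>bitvecs_bit0 n k. (-1) ^ dotn n c z))"
    unfolding meas_fourier_def by (subst sum.swap) (simp add: sum_distrib_left mult_ac)
  also have "\<dots> = (\<Sum>z\<in>{zerov, unitv 0}. (cmod (psi z))\<^sup>2 * (\<Sum>c\<in>bitvecs_bit0 n k. (-1) ^ dotn n c z))"
    using n by (intro sum.mono_neutral_right)
      (auto simp: finite_bitvecs unitv_in_bitvecs sum_bitvecs_bit0_character)
  also have "\<dots> = card (bitvecs_bit0 n k) * ((cmod (psi zerov))\<^sup>2 + (if k then -1 else 1) * (cmod (psi (unitv 0)))\<^sup>2)"
    using n by (simp add: sum_bitvecs_bit0_character unitv_in_bitvecs algebra_simps)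
  finally show ?thesis .
qed

text \<open>Cauchy--Schwarz over the coset, which is half of \<open>\<bbbF>\<^sub>2\<^sup>n\<close>.\<close>
lemma sum_p_dist_bitvecs_bit0_ge:
  assumes n: "n \<ge> 1"
  shows "((cmod (psi zerov))\<^sup>2 + (if k then -1 else 1) * (cmod (psi (unitv 0)))\<^sup>2)\<^sup>2 / 2
    \<le> (\<Sum>c\<in>bitvecs_bit0 n k. p_dist n psi (zerov, c))"
proof -
  define N where "N = real (card (bitvecs_bit0 n k))"
  define m where "m = (cmod (psi zerov))\<^sup>2 + (if k then -1 else 1) * (cmod (psi (unitv 0)))\<^sup>2"
  have N: "2 * N = 2 ^ n"
    unfolding N_def using card_bitvecs_bit0[OF n, of k] by (metis of_nat_mult of_nat_numeral of_nat_power)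
  have "0 < N"
    using N zero_less_power[of "2::real" n] by linarith
  have "(N * m)\<^sup>2 \<le> (\<Sum>c\<in>bitvecs_bit0 n k. (meas_fourier n psi c)\<^sup>2) * N"
    using sum_squared_le_sum_of_squares[of "meas_fourier n psi" "bitvecs_bit0 n k"]
    by (simp add: sum_meas_fourier_bitvecs_bit0[OF n] N_def m_def)
  then have "N * m\<^sup>2 \<le> (\<Sum>c\<in>bitvecs_bit0 n k. (meas_fourier n psi c)\<^sup>2)"
    using \<open>0 < N\<close> by (simp add: power2_eq_square mult_ac mult_le_cancel_left_pos)
  then have "N * m\<^sup>2 / 2 ^ n \<le> (\<Sum>c\<in>bitvecs_bit0 n k. (meas_fourier n psi c)\<^sup>2) / 2 ^ n"
    by (simp add: divide_right_mono)
  moreover have "N * m\<^sup>2 / 2 ^ n = m\<^sup>2 / 2"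
    using N \<open>0 < N\<close> by (simp flip: N)
  moreover have "(\<Sum>c\<in>bitvecs_bit0 n k. p_dist n psi (zerov, c))
      = (\<Sum>c\<in>bitvecs_bit0 n k. (meas_fourier n psi c)\<^sup>2) / 2 ^ n"
    by (simp add: p_dist_zerov sum_divide_distrib)
  ultimately show ?thesis
    unfolding m_def by linarith
qed

definition phase_state :: "complex \<Rightarrow> (nat \<Rightarrow> bool) \<Rightarrow> complex" where
  "phase_state om w = (if w = zerov then 1 else if w = unitv 0 then om else 0) / sqrt 2"

lemma sum_bitvecs_if_zerov_unitv:
  assumes "n \<ge> 1"
  shows "(\<Sum>z\<in>bitvecs n. if z = zerov then f z else if z = unitv 0 then g z else 0)
    = f zerov + (g (unitv 0) :: 'a::comm_monoid_add)"
proof -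
  have "(\<Sum>z\<in>bitvecs n. if z = zerov then f z else if z = unitv 0 then g z else 0)
      = (\<Sum>z\<in>{zerov, unitv 0}. if z = zerov then f z else if z = unitv 0 then g z else 0)"
    using assms by (intro sum.mono_neutral_right) (auto simp: finite_bitvecs unitv_in_bitvecs)
  then show ?thesis by simp
qed

lemma braket_phase_state:
  assumes "n \<ge> 1"
  shows "braket n (phase_state om) psi = (psi zerov + cnj om * psi (unitv 0)) / sqrt 2"
proof -
  have "braket n (phase_state om) psi = (\<Sum>z\<in>bitvecs n. if z = zerov then psi z / sqrt 2
      else if z = unitv 0 then cnj om * psi z / sqrt 2 else 0)"
    unfolding braket_def phase_state_def by (rule sum.cong) auto
  then show ?thesis
    using assms by (simp add: sum_bitvecs_if_zerov_unitv add_divide_distrib)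
qed

lemma is_state_phase_state:
  assumes "n \<ge> 1" and "cmod om = 1"
  shows "is_state n (phase_state om)"
proof -
  have "cnj om * om = 1"
    using assms(2) by (metis complex_norm_square mult.commute of_real_1 power_one)
  moreover have "complex_of_real (sqrt 2) * of_real (sqrt 2) = 2"
    by (simp flip: of_real_mult)
  ultimately show ?thesis
    using assms(1) by (simp add: is_state_def braket_phase_state phase_state_def)
qed

lemma weyl_op_phase_state:
  assumes "n \<ge> 1"
  shows "weyl_op n (a, b) (phase_state om) w = \<i> ^ dotn n a b *
    (if w = a then 1 else if w = xorv a (unitv 0) then (if b 0 then - om else om) else 0) / sqrt 2"
proof -
  have "xorv w a = zerov \<longleftrightarrow> w = a" "xorv w a = unitv 0 \<longleftrightarrow> w = xorv a (unitv 0)"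
    by (simp_all add: xorv_eq_iff)
  then show ?thesis
    using assms by (auto simp: weyl_op_def phase_state_def dotn_unitv)
qed

lemma Weyl_iff_eigen:
  "x \<in> Weyl n phi \<longleftrightarrow>
    x \<in> pts n \<and> (\<exists>s\<in>{1, -1}. \<forall>w\<in>bitvecs n. weyl_op n x phi w = s * phi w)"
  by (auto simp: Weyl_def)

lemma Weyl_phase_state:
  assumes n: "n \<ge> 1" and om: "om \<in> {1, -1, \<i>, -\<i>}"
  shows "Weyl n (phase_state om) =
    Pair zerov ` bitvecs_bit0 n False \<union> Pair (unitv 0) ` bitvecs_bit0 n (om = \<i> \<or> om = -\<i>)"
    (is "_ = ?W")
proof (intro set_eqI iffI)
  fix x assume "x \<in> Weyl n (phase_state om)"
  then obtain s where "x \<in> pts n" and s: "s \<in> {1, -1}"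
    and eigen: "\<forall>w\<in>bitvecs n. weyl_op n x (phase_state om) w = s * phase_state om w"
    unfolding Weyl_iff_eigen by blast
  obtain a b where x: "x = (a, b)" and ab: "a \<in> bitvecs n" "b \<in> bitvecs n"
    using \<open>x \<in> pts n\<close> by (cases x) (auto simp: pts_def)
  have W: "\<And>w. w \<in> bitvecs n \<Longrightarrow> weyl_op n (a, b) (phase_state om) w = s * phase_state om w"
    using eigen x by simp
  note W = W[unfolded weyl_op_phase_state[OF n]]
  have e0: "unitv 0 \<in> bitvecs n" using n by (simp add: unitv_in_bitvecs)
  have "phase_state om a \<noteq> 0"
    using W[OF ab(1)] s by auto
  then have "a = zerov \<or> a = unitv 0"
    by (auto simp: phase_state_def split: if_splits)
  then show "x \<in> ?W"
  proof
    assume a: "a = zerov"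
    have "s = 1" using W[OF zerov_in_bitvecs] by (simp add: a phase_state_def)
    then have "\<not> b 0" using W[OF e0] om by (auto simp: a phase_state_def)
    then show ?thesis using ab by (simp add: x a bitvecs_bit0_def)
  next
    assume a: "a = unitv 0"
    have "\<i> ^ of_bool (b 0) = s * om"
      using W[OF e0] n by (simp add: a phase_state_def dotn_unitv)
    then have "b 0 \<longleftrightarrow> om = \<i> \<or> om = -\<i>"
      using s om by (cases "b 0") (auto simp: complex_eq_iff)
    then show ?thesis using ab by (simp add: x a bitvecs_bit0_def)
  qed
next
  fix x assume "x \<in> ?W"
  then show "x \<in> Weyl n (phase_state om)"
  proof (elim UnE imageE)
    fix b assume x: "x = (zerov, b)" and b: "b \<in> bitvecs_bit0 n False"
    then have "\<forall>w\<in>bitvecs n. weyl_op n x (phase_state om) w = 1 * phase_state om w"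
      by (auto simp: weyl_op_phase_state[OF n] phase_state_def bitvecs_bit0_def)
    then show ?thesis
      using b by (auto simp: Weyl_iff_eigen pts_def x bitvecs_bit0_def)
  next
    fix b assume x: "x = (unitv 0, b)" and b: "b \<in> bitvecs_bit0 n (om = \<i> \<or> om = -\<i>)"
    define s :: complex where "s = (if om = 1 \<or> om = \<i> then 1 else -1)"
    have "\<forall>w\<in>bitvecs n. weyl_op n x (phase_state om) w = s * phase_state om w"
      using b om n
      by (auto simp: weyl_op_phase_state phase_state_def bitvecs_bit0_def s_def x dotn_unitv
          xorv_commute[of "unitv 0"] complex_eq_iff)
    then show ?thesis
      using b n unfolding Weyl_iff_eigen
      by (auto simp: pts_def x bitvecs_bit0_def unitv_in_bitvecs s_def)
  qed
qed

lemma is_stabilizer_phase_state: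
  assumes n: "n \<ge> 1" and om: "om \<in> {1, -1, \<i>, -\<i>}"
  shows "is_stabilizer n (phase_state om)"
proof -
  let ?k = "om = \<i> \<or> om = -\<i>"
  have "card (Weyl n (phase_state om))
      = card (Pair zerov ` bitvecs_bit0 n False) + card (Pair (unitv 0) ` bitvecs_bit0 n ?k)"
    unfolding Weyl_phase_state[OF n om] by (rule card_Un_disjoint) (auto simp: finite_bitvecs_bit0)
  also have "\<dots> = 2 ^ n"
    using card_bitvecs_bit0[OF n, of False] card_bitvecs_bit0[OF n, of ?k]
    by (simp add: card_image inj_on_def)
  finally show ?thesis
    using is_state_phase_state[OF n] om by (auto simp: is_stabilizer_def)
qed

lemma braket_ket0: "braket n ket0 psi = psi zerov"
proof -
  have "braket n ket0 psi = (\<Sum>z\<in>bitvecs n. if z = zerov then psi z else 0)"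
    unfolding braket_def ket0_def by (rule sum.cong) auto
  then show ?thesis by (simp add: finite_bitvecs)
qed

lemma stab_fidelity_bounds:
  assumes "is_stabilizer n phi0"
    and "\<And>phi. is_stabilizer n phi \<Longrightarrow> (cmod (braket n phi psi))\<^sup>2 \<le> M"
  shows "0 \<le> stab_fidelity n psi" and "stab_fidelity n psi \<le> M"
proof -
  have bdd: "bdd_above ((\<lambda>phi. (cmod (braket n phi psi))\<^sup>2) ` {phi. is_stabilizer n phi})"
    using assms(2) by (intro bdd_aboveI2[where M = M]) simp
  have "(cmod (braket n phi0 psi))\<^sup>2 \<le> stab_fidelity n psi"
    unfolding stab_fidelity_def using assms(1) bdd by (auto intro: cSUP_upper)
  then show "0 \<le> stab_fidelity n psi"
    by (meson order_trans zero_le_power2)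
  show "stab_fidelity n psi \<le> M"
    unfolding stab_fidelity_def using assms by (auto intro: cSUP_least)
qed

lemma phase_overlap_constraints:
  fixes al be :: complex
  assumes "\<And>om. om \<in> {1, -1, \<i>, -\<i>} \<Longrightarrow> (cmod (al + cnj om * be))\<^sup>2 / 2 \<le> (cmod al)\<^sup>2"
  shows "(cmod be)\<^sup>2 \<le> (cmod al)\<^sup>2"
    and "2 * ((cmod al)\<^sup>2 * (cmod be)\<^sup>2) \<le> ((cmod al)\<^sup>2 - (cmod be)\<^sup>2)\<^sup>2"
proof -
  define a where "a = (cmod al)\<^sup>2"
  define b where "b = (cmod be)\<^sup>2"
  define X where "X = Re al * Re be + Im al * Im be"
  define Y where "Y = Re al * Im be - Im al * Re be"
  have a: "a = (Re al)\<^sup>2 + (Im al)\<^sup>2" and b: "b = (Re be)\<^sup>2 + (Im be)\<^sup>2"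
    by (simp_all add: a_def b_def cmod_power2)
  have "(Re al + Re be)\<^sup>2 + (Im al + Im be)\<^sup>2 \<le> 2 * a"
    "(Re al - Re be)\<^sup>2 + (Im al - Im be)\<^sup>2 \<le> 2 * a"
    "(Re al + Im be)\<^sup>2 + (Im al - Re be)\<^sup>2 \<le> 2 * a"
    "(Re al - Im be)\<^sup>2 + (Im al + Re be)\<^sup>2 \<le> 2 * a"
    using assms[of 1] assms[of "-1"] assms[of "\<i>"] assms[of "-\<i>"]
    by (simp_all add: cmod_power2 a_def)
  then have "b + 2 * X \<le> a" "b - 2 * X \<le> a" "b + 2 * Y \<le> a" "b - 2 * Y \<le> a"
    unfolding a b X_def Y_def by (simp_all add: power2_eq_square algebra_simps)
  then have "\<bar>2 * X\<bar> \<le> a - b" "\<bar>2 * Y\<bar> \<le> a - b"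
    by linarith+
  then show "b \<le> a"
    by linarith
  have "\<bar>2 * X\<bar>\<^sup>2 \<le> (a - b)\<^sup>2" "\<bar>2 * Y\<bar>\<^sup>2 \<le> (a - b)\<^sup>2"
    using \<open>\<bar>2 * X\<bar> \<le> a - b\<close> \<open>\<bar>2 * Y\<bar> \<le> a - b\<close> by (simp_all only: power_mono abs_ge_zero)
  then have "(2 * X)\<^sup>2 + (2 * Y)\<^sup>2 \<le> (a - b)\<^sup>2 + (a - b)\<^sup>2"
    by simp
  moreover have "X\<^sup>2 + Y\<^sup>2 = a * b"
    unfolding a b X_def Y_def by (simp add: power2_eq_square algebra_simps)
  ultimately show "2 * (a * b) \<le> (a - b)\<^sup>2"
    by (simp add: power_mult_distrib)
qed

lemma two_minus_sqrt3_quartic_bound: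
  fixes a b :: real
  assumes b: "0 \<le> b" "b \<le> a" and ab: "2 * (a * b) \<le> (a - b)\<^sup>2"
  shows "(2 - sqrt 3) / 2 * a ^ 4 \<le> (a + b)\<^sup>2 / 2 * ((a - b)\<^sup>2 / 2)"
proof -
  define s where "s = sqrt 3"
  have s: "s * s = 3" "1 \<le> s" "s \<le> 2"
    unfolding s_def by (simp, simp, simp add: real_sqrt_le_iff[of 3 4, simplified])
  have "b \<le> (2 - s) * a"
  proof (cases "a = 0")
    case True
    with b show ?thesis by simp
  next
    case False
    then have "1 * a < (2 + s) * a"
      using b s by (intro mult_strict_right_mono) auto
    then have neg: "b - (2 + s) * a < 0"
      using b by linarith
    have "(b - (2 - s) * a) * (b - (2 + s) * a) = (a - b)\<^sup>2 - 2 * (a * b)"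
      by (simp add: power2_eq_square algebra_simps s(1))
    then have "0 \<le> (b - (2 - s) * a) * (b - (2 + s) * a)"
      using ab by linarith
    with neg show ?thesis
      using mult_pos_neg[of "b - (2 - s) * a" "b - (2 + s) * a"] by linarith
  qed
  then have "(s - 1) * a \<le> a - b"
    by (simp add: algebra_simps)
  then have "((s - 1) * a)\<^sup>2 \<le> (a - b)\<^sup>2"
    using b s by (intro power_mono) auto
  moreover have "((s - 1) * a)\<^sup>2 = (4 - 2 * s) * a\<^sup>2"
    by (simp add: power2_eq_square algebra_simps s(1))
  moreover have "a\<^sup>2 \<le> (a + b)\<^sup>2"
    using b by (intro power_mono) auto
  ultimately have "a\<^sup>2 * ((4 - 2 * s) * a\<^sup>2) \<le> (a + b)\<^sup>2 * (a - b)\<^sup>2"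
    using s by (intro mult_mono) auto
  moreover have "(2 - s) / 2 * a ^ 4 = a\<^sup>2 * ((4 - 2 * s) * a\<^sup>2) / 4"
    by (simp add: power4_eq_xxxx power2_eq_square)
  ultimately show ?thesis
    by (simp add: s_def)
qed

lemma sum_q_dist_bit0_coset_ge:
  assumes n: "n \<ge> 1"
  shows "((cmod (psi zerov))\<^sup>2 + (cmod (psi (unitv 0)))\<^sup>2)\<^sup>2 / 2
      * (((cmod (psi zerov))\<^sup>2 - (cmod (psi (unitv 0)))\<^sup>2)\<^sup>2 / 2)
    \<le> (\<Sum>x\<in>Pair zerov ` bitvecs_bit0 n True. q_dist n psi x)"
proof -
  let ?H = "Pair zerov ` bitvecs_bit0 n False" and ?C = "Pair zerov ` bitvecs_bit0 n True"
  have "((cmod (psi zerov))\<^sup>2 + (cmod (psi (unitv 0)))\<^sup>2)\<^sup>2 / 2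
      * (((cmod (psi zerov))\<^sup>2 - (cmod (psi (unitv 0)))\<^sup>2)\<^sup>2 / 2)
    \<le> (\<Sum>y\<in>?H. p_dist n psi y) * (\<Sum>x\<in>?C. p_dist n psi x)"
    using sum_p_dist_bitvecs_bit0_ge[OF n, of psi False] sum_p_dist_bitvecs_bit0_ge[OF n, of psi True]
    by (intro mult_mono)
       (auto simp: sum.reindex inj_on_def pts_def bitvecs_bit0_def intro!: sum_nonneg p_dist_nonneg)
  also have "\<dots> \<le> (\<Sum>x\<in>?C. q_dist n psi x)"
    by (rule sum_q_dist_ge_mass_product)
       (auto simp: pts_def bitvecs_bit0_def addp_def xorv_in_bitvecs image_iff xorv_apply)
  finally show ?thesis .
qed

theorem lemma5p5:
  fixes n :: nat and psi :: "(nat \<Rightarrow> bool) \<Rightarrow> complex"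
    and Sstar T :: "((nat \<Rightarrow> bool) \<times> (nat \<Rightarrow> bool)) set"
  assumes "n \<ge> 1"
    and "is_state n psi"
    and "\<And>phi. is_stabilizer n phi \<Longrightarrow> (cmod (braket n phi psi))\<^sup>2 \<le> (cmod (braket n ket0 psi))\<^sup>2"
    and "Sstar = {(a, b). a = zerov \<and> b \<in> bitvecs n}"
    and "T = {(a, b). a = zerov \<and> b \<in> bitvecs n \<and> \<not> b 0}"
  shows "(\<Sum>x\<in>Sstar - T. q_dist n psi x) \<ge> (2 - sqrt 3) / 2 * (stab_fidelity n psi) ^ 4"
proof -
  note n = assms(1) and optimal = assms(3)[unfolded braket_ket0]
  define a where "a = (cmod (psi zerov))\<^sup>2"
  define b where "b = (cmod (psi (unitv 0)))\<^sup>2"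
  have overlaps: "(cmod (psi zerov + cnj om * psi (unitv 0)))\<^sup>2 / 2 \<le> (cmod (psi zerov))\<^sup>2"
    if "om \<in> {1, -1, \<i>, -\<i>}" for om
    using optimal[OF is_stabilizer_phase_state[OF n that]]
    by (simp add: braket_phase_state[OF n] norm_divide power_divide)
  have F: "0 \<le> stab_fidelity n psi" "stab_fidelity n psi \<le> a"
    using stab_fidelity_bounds[OF is_stabilizer_phase_state[OF n, of 1] optimal] by (simp_all add: a_def)
  have "Sstar - T = Pair zerov ` bitvecs_bit0 n True"
    by (auto simp: assms(4,5) bitvecs_bit0_def)
  have "(2 - sqrt 3) / 2 * (stab_fidelity n psi) ^ 4 \<le> (2 - sqrt 3) / 2 * a ^ 4"
    using F by (intro mult_left_mono power_mono) (auto simp: real_sqrt_le_iff[of 3 4, simplified])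
  also have "\<dots> \<le> (a + b)\<^sup>2 / 2 * ((a - b)\<^sup>2 / 2)"
    using phase_overlap_constraints[OF overlaps]
    by (intro two_minus_sqrt3_quartic_bound) (simp_all add: a_def b_def)
  also have "\<dots> \<le> (\<Sum>x\<in>Sstar - T. q_dist n psi x)"
    unfolding \<open>Sstar - T = _\<close> a_def b_def by (rule sum_q_dist_bit0_coset_ge[OF n])
  finally show ?thesis .
qed

end
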